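(* For every $r\in(\tfrac13,\tfrac12]$, $\gamma(\omega_r)>4$. In particular, the simulation cost of every entangled unsteerable two-qubit Werner state exceeds $4$, which is strictly greater than that of any separable Werner state $\omega_r$, $r\in[0,\tfrac13]$.
   Context: $\omega_r=r|\Psi^-\rangle\langle\Psi^-|+(1-r)\mathbb{I}\otimes\mathbb{I}/4$ with $|\Psi^-\rangle=(|01\rangle-|10\rangle)/\sqrt2$; it is separable iff $r\le\tfrac13$. The assemblage generated from $\rho_{AB}$ by POVMs $\{M_{a|x}\}$ on $A$ is $\sigma_{a|x}=\mathrm{Tr}_A[(M_{a|x}\otimes\mathbb{I})\rho_{AB}]$; an LHS model of size $n$ is a distribution $p(i)$ on $\{1,\dots,n\}$, states $\rho_i$ on $B$ and conditional probabilities $p(a|x,i)$ with $\sigma_{a|x}=\sum_{i=1}^n p(a|x,i)p(i)\rho_i$. $\gamma(\rho_{AB})$ is the smallest $n$ such that every assemblage generated from $\rho_{AB}$ by any family of POVMs on $A$ admits an LHS model of size $n$ ($+\infty$ if no such $n$). *)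

theory Defs
  imports "HOL-Analysis.Analysis" "HOL-Library.Extended_Nat"
begin

text \<open>Finite-dimensional complex matrices are represented as 'complex^'n^'n'
(row index first).  The two-qubit space C^2 (x) C^2 is indexed by the product type
'2 \<times> 2', i.e. the basis |ab> corresponds to the index (a,b).\<close>

definition hermitian_cm :: "complex^'n::finite^'n \<Rightarrow> bool" where
  "hermitian_cm A \<longleftrightarrow> (\<forall>i j. A $ i $ j = cnj (A $ j $ i))"

definition psd :: "complex^'n::finite^'n \<Rightarrow> bool" where
  "psd A \<longleftrightarrow> hermitian_cm A \<and>
     (\<forall>v :: complex^'n. let z = (\<Sum>i\<in>UNIV. cnj (v $ i) * (A *v v) $ i) in Im z = 0 \<and> 0 \<le> Re z)"

definition density :: "complex^'n::finite^'n \<Rightarrow> bool" where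
  "density A \<longleftrightarrow> psd A \<and> trace A = 1"

definition kron :: "complex^'c::finite^'r::finite \<Rightarrow> complex^'d::finite^'s::finite \<Rightarrow> complex^('c \<times> 'd)^('r \<times> 's)" where
  "kron A B = (\<chi> r c. A $ fst r $ fst c * B $ snd r $ snd c)"

definition ptrace_A :: "complex^('a::finite \<times> 'b::finite)^('a \<times> 'b) \<Rightarrow> complex^'b^'b" where
  "ptrace_A X = (\<chi> b b'. \<Sum>a\<in>UNIV. X $ (a, b) $ (a, b'))"

definition povm :: "(complex^'n::finite^'n) list \<Rightarrow> bool" where
  "povm M \<longleftrightarrow> M \<noteq> [] \<and> (\<forall>E\<in>set M. psd E) \<and> sum_list M = mat 1"

definition assemblage :: "complex^('a::finite \<times> 'b::finite)^('a \<times> 'b) \<Rightarrow> (complex^'a^'a) list \<Rightarrow> nat \<Rightarrow> complex^'b^'b" where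
  "assemblage \<rho> M a = ptrace_A (kron (M ! a) (mat 1) ** \<rho>)"

text \<open>The assemblage generated from rho by the family F of POVMs on A (the measurement
label x is the POVM itself) admits an LHS model of size n:
p(i) a distribution on {1..n}, rho_i states on B, p(a|x,i) conditional probabilities.\<close>
definition has_LHS_model :: "nat \<Rightarrow> complex^('a::finite \<times> 'b::finite)^('a \<times> 'b) \<Rightarrow> (complex^'a^'a) list set \<Rightarrow> bool" where
  "has_LHS_model n \<rho> F \<longleftrightarrow>
    (\<exists>(p :: nat \<Rightarrow> real) (\<rho>s :: nat \<Rightarrow> complex^'b^'b) (q :: (complex^'a^'a) list \<Rightarrow> nat \<Rightarrow> nat \<Rightarrow> real).
       (\<forall>i\<in>{1..n}. 0 \<le> p i) \<and> (\<Sum>i=1..n. p i) = 1 \<and>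
       (\<forall>i\<in>{1..n}. density (\<rho>s i)) \<and>
       (\<forall>M\<in>F. \<forall>i\<in>{1..n}. (\<forall>a<length M. 0 \<le> q M a i) \<and> (\<Sum>a<length M. q M a i) = 1) \<and>
       (\<forall>M\<in>F. \<forall>a<length M. assemblage \<rho> M a = (\<Sum>i=1..n. (q M a i * p i) *\<^sub>R \<rho>s i)))"

definition gamma :: "complex^('a::finite \<times> 'b::finite)^('a \<times> 'b) \<Rightarrow> enat" where
  "gamma \<rho> = (if \<exists>n. \<forall>F. (\<forall>M\<in>F. povm M) \<longrightarrow> has_LHS_model n \<rho> F
              then enat (LEAST n. \<forall>F. (\<forall>M\<in>F. povm M) \<longrightarrow> has_LHS_model n \<rho> F)
              else \<infinity>)"

definition psi_minus :: "complex^(2 \<times> 2)" where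
  "psi_minus = (\<chi> k. if k = (0, 1) then 1 / complex_of_real (sqrt 2)
                         else if k = (1, 0) then - 1 / complex_of_real (sqrt 2) else 0)"

definition werner :: "real \<Rightarrow> complex^(2 \<times> 2)^(2 \<times> 2)" where
  "werner r = r *\<^sub>R (\<chi> i j. psi_minus $ i * cnj (psi_minus $ j)) + ((1 - r) / 4) *\<^sub>R mat 1"

end

theory Submission
  imports Defs
begin

text \<open>Bob's conditional states are described by Bloch vectors. If \<open>r \<le> 1/3\<close>, four hidden states
  suffice: Bob holds the state with Bloch vector \<open>-3r t\<^sub>i\<close>, where \<open>t\<^sub>1, ..., t\<^sub>4\<close> are the vertices of a
  regular tetrahedron inscribed in the unit sphere, and Alice answers with the Born probability of her
  effect in the pure state with Bloch vector \<open>t\<^sub>i\<close>.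
  Conversely, measuring the spin along a unit vector \<open>u\<close> steers Bob to the Bloch vector \<open>r u\<close>, so the
  Bloch vectors of the hidden states of a model of size \<open>n \<le> 4\<close> are at most four points of the unit
  ball whose convex hull contains the sphere of radius \<open>r\<close>. For every such point \<open>x\<close>, the point
  opposite to \<open>x\<close> on that sphere yields a convex combination of the points representing \<open>0\<close> in which
  \<open>x\<close> has weight at least \<open>r/(1+r)\<close>. The points span the space, so there is only one such combination;
  its weights sum to \<open>1 \<ge> 4r/(1+r)\<close>, i.e. \<open>r \<le> 1/3\<close>.\<close>

section \<open>Affine relations and spheres in convex hulls\<close>

lemma in_span_delete_if_lincomb_eq_0:
  fixes P :: "'a::real_vector set"
  assumes "finite P" "x \<in> P" "d x \<noteq> 0" "(\<Sum>y\<in>P. d y *\<^sub>R y) = 0"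
  shows "x \<in> span (P - {x})"
proof -
  define s where "s = (\<Sum>y\<in>P - {x}. d y *\<^sub>R y)"
  have "d x *\<^sub>R x + s = 0"
    using assms(4) sum.remove[OF assms(1,2), of "\<lambda>y. d y *\<^sub>R y"] by (simp add: s_def)
  then have "x = (- 1 / d x) *\<^sub>R s"
    using assms(3) by (simp add: eq_neg_iff_add_eq_0[symmetric] field_simps)
  moreover have "s \<in> span (P - {x})"
    unfolding s_def by (intro span_sum span_mul span_base)
  ultimately show ?thesis
    by (metis span_mul)
qed

lemma span_delete_eq_if_lincomb_eq_0:
  fixes P :: "'a::real_vector set"
  assumes "finite P" "x \<in> P" "d x \<noteq> 0" "(\<Sum>y\<in>P. d y *\<^sub>R y) = 0"
  shows "span (P - {x}) = span P"
  using span_redundant[OF in_span_delete_if_lincomb_eq_0[OF assms]] assms(2)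
  by (simp add: insert_absorb)

lemma dim_less_card_if_affine_relation:
  fixes P :: "'a::real_vector set"
  assumes "finite P" "sum d P = 1" "(\<Sum>x\<in>P. d x *\<^sub>R x) = 0"
  shows "dim P < card P"
proof -
  obtain x where x: "x \<in> P" "d x \<noteq> 0"
    using assms(2) by (metis one_neq_zero sum.neutral)
  have "dim P = dim (P - {x})"
    using span_delete_eq_if_lincomb_eq_0[OF assms(1) x assms(3)] by (metis dim_span)
  also have "\<dots> \<le> card (P - {x})"
    using assms(1) by (simp add: dim_le_card')
  also have "\<dots> < card P"
    using assms(1) x(1) by (rule card_Diff1_less)
  finally show ?thesis .
qed

lemma dim_Suc_less_card_if_distinct_affine_relations:
  fixes P :: "'a::real_vector set"
  assumes P: "finite P"
    and d: "sum d P = 1" "(\<Sum>y\<in>P. d y *\<^sub>R y) = 0"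
    and d': "sum d' P = 1" "(\<Sum>y\<in>P. d' y *\<^sub>R y) = 0"
    and x: "x \<in> P" "d x \<noteq> d' x"
  shows "Suc (dim P) < card P"
proof -
  define e where "e y = d y - d' y" for y
  have e: "sum e P = 0" "(\<Sum>y\<in>P. e y *\<^sub>R y) = 0" "e x \<noteq> 0"
    using d d' x(2) by (simp_all add: e_def sum_subtractf scaleR_diff_left)
  define f where "f y = d y - (d x / e x) * e y" for y
  have fx: "f x = 0"
    using e(3) by (simp add: f_def)
  have "sum f P = sum d P - (d x / e x) * sum e P"
    by (simp add: f_def sum_subtractf sum_distrib_left)
  moreover have "(\<Sum>y\<in>P. f y *\<^sub>R y) = (\<Sum>y\<in>P. d y *\<^sub>R y) - (d x / e x) *\<^sub>R (\<Sum>y\<in>P. e y *\<^sub>R y)"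
    by (simp add: f_def scaleR_diff_left sum_subtractf scaleR_right.sum)
  ultimately have "sum f P = 1" "(\<Sum>y\<in>P. f y *\<^sub>R y) = 0"
    using d e by simp_all
  then have "sum f (P - {x}) = 1" "(\<Sum>y\<in>P - {x}. f y *\<^sub>R y) = 0"
    using P x(1) fx by (simp_all add: sum.remove)
  then have "dim (P - {x}) < card (P - {x})"
    using P by (intro dim_less_card_if_affine_relation) auto
  moreover have "dim (P - {x}) = dim P"
    using span_delete_eq_if_lincomb_eq_0[OF P x(1) e(3,2)] by (metis dim_span)
  ultimately show ?thesis
    using P x(1) by (simp add: card_Diff_singleton)
qed

lemma dim_eq_DIM_if_sphere_subset_convex_hull:
  fixes P :: "'a::euclidean_space set"
  assumes "r > 0" "sphere 0 r \<subseteq> convex hull P"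
  shows "dim P = DIM('a)"
proof -
  have "v \<in> span P" for v :: 'a
  proof (cases "v = 0")
    case False
    then have "(r / norm v) *\<^sub>R v \<in> span P"
      using assms convex_hull_subset_span by (fastforce simp: dist_norm)
    then have "(norm v / r) *\<^sub>R ((r / norm v) *\<^sub>R v) \<in> span P"
      by (rule span_mul)
    then show ?thesis
      using False assms(1) by simp
  qed (simp add: span_zero)
  then have "span P = UNIV"
    by auto
  then show ?thesis
    by (simp add: dim_eq_full)
qed

lemma convex_relation_with_large_weight:
  fixes P :: "'a::real_normed_vector set"
  assumes P: "finite P" "P \<subseteq> cball 0 1" and r: "r > 0" "sphere 0 r \<subseteq> convex hull P"
    and x: "x \<in> P"
  obtains d where "\<forall>y\<in>P. 0 \<le> d y" "sum d P = 1" "(\<Sum>y\<in>P. d y *\<^sub>R y) = 0" "r / (1 + r) \<le> d x"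
proof (cases "x = 0")
  case True
  have "r / (1 + r) \<le> 1"
    using r by simp
  moreover have "(\<Sum>y\<in>P. (if y = x then 1 else 0) *\<^sub>R y) = 0"
    using True by (intro sum.neutral) simp
  ultimately show ?thesis
    using that[of "\<lambda>y. if y = x then 1 else 0"] P(1) x by simp
next
  case False
  define t where "t = r / norm x"
  have "norm x \<le> 1"
    using P x by auto
  then have t: "t > 0" "r \<le> t"
    using False r by (simp_all add: t_def field_simps mult_left_le)
  have "- t *\<^sub>R x \<in> sphere 0 r"
    using False r by (simp add: t_def)
  then obtain w where w: "\<forall>y\<in>P. 0 \<le> w y" "sum w P = 1" "(\<Sum>y\<in>P. w y *\<^sub>R y) = - t *\<^sub>R x"
    using r(2) unfolding convex_hull_finite[OF P(1)] by blast
  define d where "d y = (w y + (if y = x then t else 0)) / (1 + t)" for y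
  show ?thesis
  proof (rule that)
    show "\<forall>y\<in>P. 0 \<le> d y"
      using w(1) t by (simp add: d_def)
    show "sum d P = 1"
      using w(2) t P(1) x by (simp add: d_def sum.distrib flip: sum_divide_distrib)
    have "(\<Sum>y\<in>P. d y *\<^sub>R y) = (1 / (1 + t)) *\<^sub>R (\<Sum>y\<in>P. w y *\<^sub>R y + (if y = x then t *\<^sub>R y else 0))"
      unfolding scaleR_right.sum by (intro sum.cong) (auto simp: d_def divide_inverse_commute algebra_simps)
    also have "\<dots> = (1 / (1 + t)) *\<^sub>R ((\<Sum>y\<in>P. w y *\<^sub>R y) + t *\<^sub>R x)"
      using P(1) x by (simp add: sum.distrib)
    finally show "(\<Sum>y\<in>P. d y *\<^sub>R y) = 0"
      using w(3) by simp
    have "r / (1 + r) \<le> t / (1 + t)"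
      using t r by (simp add: field_simps)
    also have "\<dots> \<le> d x"
      using w(1) x t by (simp add: d_def divide_right_mono)
    finally show "r / (1 + r) \<le> d x" .
  qed
qed

lemma sphere_subset_convex_hull_radius_le:
  fixes P :: "'a::euclidean_space set" and r :: real
  assumes P: "finite P" "card P \<le> Suc DIM('a)" "P \<subseteq> cball 0 1"
    and hull: "sphere 0 r \<subseteq> convex hull P"
  shows "real DIM('a) * r \<le> 1"
proof (cases "r > 0")
  case True
  have dim: "dim P = DIM('a)"
    using True hull by (rule dim_eq_DIM_if_sphere_subset_convex_hull)
  have "\<forall>x\<in>P. \<exists>d. (\<forall>y\<in>P. 0 \<le> d y) \<and> sum d P = 1 \<and> (\<Sum>y\<in>P. d y *\<^sub>R y) = 0 \<and> r / (1 + r) \<le> d x"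
    using convex_relation_with_large_weight[OF P(1,3) True hull] by blast
  then obtain D where D: "\<And>x. x \<in> P \<Longrightarrow> (\<forall>y\<in>P. 0 \<le> D x y) \<and> sum (D x) P = 1 \<and>
      (\<Sum>y\<in>P. D x y *\<^sub>R y) = 0 \<and> r / (1 + r) \<le> D x x"
    by metis
  have unique: "D x y = D x' y" if "x \<in> P" "x' \<in> P" "y \<in> P" for x x' y
  proof (rule ccontr)
    assume "D x y \<noteq> D x' y"
    then have "Suc (dim P) < card P"
      using D[OF that(1)] D[OF that(2)] P(1) that(3)
      by (intro dim_Suc_less_card_if_distinct_affine_relations) auto
    then show False
      using dim P(2) by simp
  qed
  obtain x0 where x0: "x0 \<in> P"
    using dim by (metis DIM_positive dim_empty ex_in_conv less_irrefl)
  have card: "card P = Suc DIM('a)"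
    using dim_less_card_if_affine_relation[OF P(1), of "D x0"] D[OF x0] dim P(2) by simp
  have "card P * (r / (1 + r)) = (\<Sum>y\<in>P. r / (1 + r))"
    by simp
  also have "\<dots> \<le> (\<Sum>y\<in>P. D y y)"
    using D by (intro sum_mono) blast
  also have "\<dots> = sum (D x0) P"
    using x0 by (intro sum.cong refl) (metis unique)
  finally have "(DIM('a) + 1) * (r / (1 + r)) \<le> 1"
    using D[OF x0] card by simp
  then show ?thesis
    using True by (simp add: field_simps)
next
  case False
  then have "real DIM('a) * r \<le> 0"
    by (simp add: mult_nonneg_nonpos)
  then show ?thesis
    by linarith
qed

section \<open>Qubit operators and the Bloch representation\<close>

lemma UNIV_2_eq: "(UNIV :: 2 set) = {0, 1}"
proof -
  have "(2 :: 2) = 0"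
    by simp
  then show ?thesis
    using UNIV_2 by auto
qed

lemma sum_UNIV_2: "sum f (UNIV :: 2 set) = f 0 + f 1"
  by (simp add: UNIV_2_eq)

lemma forall_UNIV_2: "(\<forall>i :: 2. P i) \<longleftrightarrow> P 0 \<and> P 1"
  by (metis UNIV_2_eq UNIV_I insertE singletonD)

lemma trace_2x2: "trace (A :: complex^2^2) = A$0$0 + A$1$1"
  by (simp add: trace_def sum_UNIV_2)

lemma quadratic_form_2x2:
  "(\<Sum>i\<in>UNIV. cnj (v$i) * ((A :: complex^2^2) *v v)$i) =
     cnj (v$0) * (A$0$0 * v$0 + A$0$1 * v$1) + cnj (v$1) * (A$1$0 * v$0 + A$1$1 * v$1)"
  by (simp add: sum_UNIV_2 matrix_vector_mult_def)

lemma hermitian_2x2_iff: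
  "hermitian_cm (A :: complex^2^2) \<longleftrightarrow> Im (A$0$0) = 0 \<and> Im (A$1$1) = 0 \<and> A$0$1 = cnj (A$1$0)"
  unfolding hermitian_cm_def forall_UNIV_2 by (auto simp: complex_eq_iff)

definition vec2 :: "complex \<Rightarrow> complex \<Rightarrow> complex^2" where
  "vec2 x y = (\<chi> i. if i = 0 then x else y)"

lemma vec2_nth [simp]: "vec2 x y $ 0 = x" "vec2 x y $ 1 = y"
  by (simp_all add: vec2_def)

lemma psd_2x2_iff:
  fixes A :: "complex^2^2"
  shows "psd A \<longleftrightarrow> hermitian_cm A \<and> 0 \<le> Re (A$0$0) \<and> 0 \<le> Re (A$1$1) \<and>
      (cmod (A$1$0))\<^sup>2 \<le> Re (A$0$0) * Re (A$1$1)"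
    (is "_ \<longleftrightarrow> _ \<and> 0 \<le> ?a \<and> 0 \<le> ?d \<and> (cmod ?c)\<^sup>2 \<le> ?a * ?d")
proof
  assume psd: "psd A"
  then have h: "Im (A$0$0) = 0" "Im (A$1$1) = 0" "A$0$1 = cnj ?c"
    unfolding psd_def hermitian_2x2_iff by auto
  have q: "0 \<le> Re (cnj (v$0) * (A$0$0 * v$0 + A$0$1 * v$1) + cnj (v$1) * (?c * v$0 + A$1$1 * v$1))"
    for v :: "complex^2"
    using psd unfolding psd_def quadratic_form_2x2 Let_def by blast
  have a: "0 \<le> ?a" and d: "0 \<le> ?d"
    using q[of "vec2 1 0"] q[of "vec2 0 1"] by simp_all
  have ad: "0 \<le> ?a * (?a * ?d - (cmod ?c)\<^sup>2)" "0 \<le> ?d * (?a * ?d - (cmod ?c)\<^sup>2)"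
    using q[of "vec2 (- A$0$1) (A$0$0)"] q[of "vec2 (A$1$1) (- ?c)"] h
    by (simp_all add: cmod_power2 algebra_simps, simp_all add: power2_eq_square algebra_simps)
  have "(cmod ?c)\<^sup>2 \<le> ?a * ?d"
  proof (cases "?a = 0 \<and> ?d = 0")
    case True
    have "0 \<le> - 2 * (cmod ?c)\<^sup>2"
      using q[of "vec2 1 (- ?c)"] h True
      by (simp add: cmod_power2 algebra_simps, simp add: power2_eq_square)
    then have "?c = 0"
      by simp
    then show ?thesis
      using True by simp
  next
    case False
    then show ?thesis
      using a d ad by (auto simp: zero_le_mult_iff)
  qed
  then show "hermitian_cm A \<and> 0 \<le> ?a \<and> 0 \<le> ?d \<and> (cmod ?c)\<^sup>2 \<le> ?a * ?d"
    using psd a d by (simp add: psd_def)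
next
  assume "hermitian_cm A \<and> 0 \<le> ?a \<and> 0 \<le> ?d \<and> (cmod ?c)\<^sup>2 \<le> ?a * ?d"
  then have herm: "hermitian_cm A" and a: "0 \<le> ?a" and d: "0 \<le> ?d" and c: "(cmod ?c)\<^sup>2 \<le> ?a * ?d"
    by auto
  have h: "Im (A$0$0) = 0" "Im (A$1$1) = 0" "A$0$1 = cnj ?c"
    using herm unfolding hermitian_2x2_iff by auto
  have "Im z = 0 \<and> 0 \<le> Re z"
    if z: "z = cnj (v$0) * (A$0$0 * v$0 + A$0$1 * v$1) + cnj (v$1) * (?c * v$0 + A$1$1 * v$1)" for v z
  proof
    show "Im z = 0"
      using h by (simp add: z algebra_simps)
    define x1 x2 y1 y2 c1 c2 where coords: "x1 = Re (v$0)" "x2 = Im (v$0)" "y1 = Re (v$1)" "y2 = Im (v$1)"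
      "c1 = Re ?c" "c2 = Im ?c"
    have re: "Re z = ?a * (x1\<^sup>2 + x2\<^sup>2) + ?d * (y1\<^sup>2 + y2\<^sup>2) + 2 * (c1 * (x1*y1 + x2*y2) + c2 * (x1*y2 - x2*y1))"
      using h by (simp add: z coords algebra_simps power2_eq_square)
    have c': "c1\<^sup>2 + c2\<^sup>2 \<le> ?a * ?d"
      using c by (simp add: cmod_power2 coords)
    show "0 \<le> Re z"
    proof (cases "?a = 0")
      case True
      then have "c1 = 0" "c2 = 0"
        using c' by (auto simp: sum_power2_le_zero_iff)
      then show ?thesis
        using re True d by simp
    next
      case False
      text \<open>Completing the square in the first variable.\<close>
      have "?a * Re z = (?a*x1 + c1*y1 + c2*y2)\<^sup>2 + (?a*x2 + c1*y2 - c2*y1)\<^sup>2 + (?a*?d - c1\<^sup>2 - c2\<^sup>2) * (y1\<^sup>2 + y2\<^sup>2)"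
        unfolding re by (simp add: algebra_simps power2_eq_square)
      also have "\<dots> \<ge> 0"
        using c' by simp
      finally show ?thesis
        using a False by (simp add: zero_le_mult_iff)
    qed
  qed
  then show "psd A"
    unfolding psd_def quadratic_form_2x2 Let_def using herm by blast
qed

text \<open>\<open>bloch_matrix x b = (x I + b\<^sub>1 \<sigma>\<^sub>1 + b\<^sub>2 \<sigma>\<^sub>2 + b\<^sub>3 \<sigma>\<^sub>3) / 2\<close> in terms of the Pauli matrices;
  \<open>bloch_vector\<close> inverts it on Hermitian matrices.\<close>
definition bloch_matrix :: "real \<Rightarrow> real^3 \<Rightarrow> complex^2^2" where
  "bloch_matrix x b = (\<chi> i j.
     if i = 0 then (if j = 0 then of_real ((x + b$3) / 2) else Complex (b$1 / 2) (- b$2 / 2))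
     else (if j = 0 then Complex (b$1 / 2) (b$2 / 2) else of_real ((x - b$3) / 2)))"

definition bloch_vector :: "complex^2^2 \<Rightarrow> real^3" where
  "bloch_vector A = vector [2 * Re (A$1$0), 2 * Im (A$1$0), Re (A$0$0) - Re (A$1$1)]"

lemma bloch_matrix_nth [simp]:
  "bloch_matrix x b $ 0 $ 0 = of_real ((x + b$3) / 2)" "bloch_matrix x b $ 0 $ 1 = Complex (b$1 / 2) (- b$2 / 2)"
  "bloch_matrix x b $ 1 $ 0 = Complex (b$1 / 2) (b$2 / 2)" "bloch_matrix x b $ 1 $ 1 = of_real ((x - b$3) / 2)"
  by (simp_all add: bloch_matrix_def)

lemma inner_real_3: "(b :: real^3) \<bullet> b = (b$1)\<^sup>2 + (b$2)\<^sup>2 + (b$3)\<^sup>2"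
  by (simp add: inner_vec_def sum_3 power2_eq_square)

lemma psd_bloch_matrix:
  assumes "norm b \<le> x"
  shows "psd (bloch_matrix x b)"
proof -
  have x: "0 \<le> x"
    using assms norm_ge_zero order_trans by blast
  have "b \<bullet> b \<le> x\<^sup>2"
    using assms by (simp add: power_mono flip: power2_norm_eq_inner)
  then have bb: "(b$1)\<^sup>2 + (b$2)\<^sup>2 + (b$3)\<^sup>2 \<le> x\<^sup>2"
    by (simp add: inner_real_3)
  then have "(b$3)\<^sup>2 \<le> x\<^sup>2"
    using zero_le_power2[of "b$1"] zero_le_power2[of "b$2"] by linarith
  then have "\<bar>b$3\<bar> \<le> x"
    using x by (simp flip: abs_le_square_iff)
  moreover have "(cmod (Complex (b$1 / 2) (b$2 / 2)))\<^sup>2 \<le> (x + b$3) / 2 * ((x - b$3) / 2)"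
    using bb unfolding cmod_power2 by (simp add: power2_eq_square field_simps)
  ultimately show ?thesis
    unfolding psd_2x2_iff hermitian_2x2_iff by (auto simp: complex_eq_iff)
qed

lemma trace_bloch_matrix: "trace (bloch_matrix x b) = of_real x"
  by (simp add: trace_2x2 flip: of_real_add) (simp add: field_simps)

lemma bloch_vector_bloch_matrix: "bloch_vector (bloch_matrix x b) = b"
  unfolding bloch_vector_def vec_eq_iff forall_3 by (simp add: field_simps)

lemma linear_bloch_vector: "linear bloch_vector"
  by (rule linearI) (simp_all add: bloch_vector_def vec_eq_iff forall_3 algebra_simps)

lemma linear_Re_trace: "linear (\<lambda>A :: complex^'n::finite^'n. Re (trace A))"
  by (rule linearI) (simp_all add: trace_def sum.distrib sum_distrib_left)

lemma norm_bloch_vector_le_1: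
  assumes "density (A :: complex^2^2)"
  shows "norm (bloch_vector A) \<le> 1"
proof -
  have "psd A" and tr: "Re (A$0$0) + Re (A$1$1) = 1"
    using assms unfolding density_def trace_2x2 by (auto simp: complex_eq_iff)
  then have c: "(cmod (A$1$0))\<^sup>2 \<le> Re (A$0$0) * Re (A$1$1)"
    by (simp add: psd_2x2_iff)
  have "bloch_vector A \<bullet> bloch_vector A = 4 * (cmod (A$1$0))\<^sup>2 + (Re (A$0$0) - Re (A$1$1))\<^sup>2"
    unfolding inner_real_3 bloch_vector_def cmod_power2 by (simp add: algebra_simps power2_eq_square)
  also have "\<dots> = (Re (A$0$0) + Re (A$1$1))\<^sup>2 - 4 * (Re (A$0$0) * Re (A$1$1) - (cmod (A$1$0))\<^sup>2)"
    by (simp add: algebra_simps power2_eq_square)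
  also have "\<dots> \<le> 1"
    using tr c by simp
  finally show ?thesis
    by (simp add: norm_eq_sqrt_inner)
qed

section \<open>Assemblages of the Werner state\<close>

lemma sum_UNIV_prod:
  "(\<Sum>k\<in>(UNIV :: ('a::finite \<times> 'b::finite) set). g k) = (\<Sum>c\<in>UNIV. \<Sum>d\<in>UNIV. g (c, d))"
  by (simp add: sum.cartesian_product case_prod_unfold flip: UNIV_Times_UNIV)

lemma ptrace_A_kron_mult_nth:
  fixes E :: "complex^'a::finite^'a" and W :: "complex^('a \<times> 'b::finite)^('a \<times> 'b)"
  shows "ptrace_A (kron E (mat 1) ** W) $ b $ b' = (\<Sum>a\<in>UNIV. \<Sum>c\<in>UNIV. E$a$c * W$(c,b)$(a,b'))"
proof -
  have "ptrace_A (kron E (mat 1) ** W) $ b $ b' =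
      (\<Sum>a\<in>UNIV. \<Sum>c\<in>UNIV. \<Sum>d\<in>UNIV. E$a$c * (mat 1 :: complex^'b^'b)$b$d * W$(c,d)$(a,b'))"
    by (simp add: ptrace_A_def kron_def matrix_matrix_mult_def sum_UNIV_prod)
  also have "\<dots> = (\<Sum>a\<in>UNIV. \<Sum>c\<in>UNIV. E$a$c * W$(c,b)$(a,b'))"
  proof -
    have "(\<Sum>d\<in>UNIV. x * (mat 1 :: complex^'b^'b)$b$d * y d) = x * y b" for x y
      by (simp add: mat_def if_distrib[of "\<lambda>z. x * z * _"] cong: if_cong)
    then show ?thesis
      by simp
  qed
  finally show ?thesis .
qed

lemma werner_nth:
  "werner r $ i $ j = of_real r * (psi_minus $ i * cnj (psi_minus $ j)) + (if i = j then of_real ((1 - r) / 4) else 0)"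
  unfolding werner_def mat_def
  by (simp only: vector_add_component vector_scaleR_component vec_lambda_beta) (simp add: scaleR_conv_of_real)

text \<open>The second summand is \<open>r/2\<close> times the adjugate of \<open>E\<close>.\<close>
definition werner_assemblage :: "real \<Rightarrow> complex^2^2 \<Rightarrow> complex^2^2" where
  "werner_assemblage r E = (\<chi> b b'.
     (if b = b' then of_real ((1 - r) / 4) * (E$0$0 + E$1$1) else 0) +
     of_real (r / 2) * (if b = 0 then (if b' = 0 then E$1$1 else - E$0$1) else (if b' = 0 then - E$1$0 else E$0$0)))"

lemma assemblage_werner: "assemblage (werner r) M a = werner_assemblage r (M ! a)"
proof -
  have sqrt2: "of_real (sqrt 2) * of_real (sqrt 2) = (2 :: complex)"
    "of_real (sqrt 2) * (of_real (sqrt 2) * z) = 2 * z" for z :: complex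
    by (simp_all add: mult.assoc[symmetric] flip: of_real_mult)
  have psi_minus_nth: "psi_minus $ (0,0) = 0" "psi_minus $ (1,1) = 0"
    "psi_minus $ (0,1) = 1 / of_real (sqrt 2)" "psi_minus $ (1,0) = - 1 / of_real (sqrt 2)"
    by (simp_all add: psi_minus_def)
  show ?thesis
    unfolding assemblage_def vec_eq_iff forall_UNIV_2 werner_assemblage_def ptrace_A_kron_mult_nth
    by (simp add: sum_UNIV_2 werner_nth psi_minus_nth sqrt2 field_simps)
qed

section \<open>A tetrahedral LHS model\<close>

lemma trace_mult_bloch_matrix:
  "trace (E ** bloch_matrix x a) = E$0$0 * of_real ((x + a$3) / 2) + E$0$1 * Complex (a$1 / 2) (a$2 / 2)
     + E$1$0 * Complex (a$1 / 2) (- a$2 / 2) + E$1$1 * of_real ((x - a$3) / 2)"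
  by (simp add: trace_def matrix_matrix_mult_def sum_UNIV_2)

text \<open>For a unit vector \<open>a \<noteq> -e\<^sub>3\<close>, \<open>bloch_ket a\<close> is a unit vector whose projector is \<open>bloch_matrix 1 a\<close>.\<close>
definition bloch_ket :: "real^3 \<Rightarrow> complex^2" where
  "bloch_ket a = vec2 (of_real (sqrt ((1 + a$3) / 2)))
     (Complex (a$1 / sqrt (2 * (1 + a$3))) (a$2 / sqrt (2 * (1 + a$3))))"

lemma quadratic_form_bloch_ket:
  fixes E :: "complex^2^2"
  assumes a: "a \<bullet> a = 1" "a$3 > -1"
  shows "(\<Sum>i\<in>UNIV. cnj (bloch_ket a $ i) * (E *v bloch_ket a) $ i) = trace (E ** bloch_matrix 1 a)"
proof -
  define t where "t = 1 + a$3"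
  define S K where "S = sqrt (t / 2)" and "K = sqrt (2 * t)"
  have t: "t > 0"
    using a t_def by simp
  have SS: "S * S = t / 2" and KK: "K * K = 2 * t" and SK: "S * K = t" and K: "K > 0"
    using t by (simp_all add: S_def K_def flip: real_sqrt_mult)
  have S_div_K: "S * (y / K) = y / 2" for y
  proof -
    have "S * (y / K) = y * (S * K) / (K * K)"
      using K by (simp add: field_simps)
    then show ?thesis
      unfolding SK KK using t by simp
  qed
  have sq: "(a$1)\<^sup>2 + (a$2)\<^sup>2 = 1 - (a$3)\<^sup>2"
    using a(1) unfolding inner_real_3 by simp
  have "(a$1 / K)\<^sup>2 + (a$2 / K)\<^sup>2 = ((a$1)\<^sup>2 + (a$2)\<^sup>2) / (K * K)"
    by (simp add: power2_eq_square add_divide_distrib)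
  also have "\<dots> = (1 - a$3) * t / (2 * t)"
    unfolding sq KK t_def by (simp add: power2_eq_square algebra_simps)
  finally have ww: "(a$1 / K)\<^sup>2 + (a$2 / K)\<^sup>2 = (1 - a$3) / 2"
    using t by simp
  define x0 x1 where "x0 = complex_of_real S" and "x1 = Complex (a$1 / K) (a$2 / K)"
  have p00: "cnj x0 * x0 = of_real ((1 + a$3) / 2)"
    using SS by (simp add: x0_def t_def complex_eq_iff)
  have p01: "cnj x0 * x1 = Complex (a$1 / 2) (a$2 / 2)" and p10: "cnj x1 * x0 = Complex (a$1 / 2) (- a$2 / 2)"
  proof -
    have "cnj x0 * x1 = Complex (S * (a$1 / K)) (S * (a$2 / K))"
      "cnj x1 * x0 = Complex (S * (a$1 / K)) (- (S * (a$2 / K)))"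
      by (simp_all add: x0_def x1_def complex_eq_iff)
    then show "cnj x0 * x1 = Complex (a$1 / 2) (a$2 / 2)" "cnj x1 * x0 = Complex (a$1 / 2) (- a$2 / 2)"
      by (simp_all only: S_div_K) simp_all
  qed
  have p11: "cnj x1 * x1 = of_real ((1 - a$3) / 2)"
    using ww by (simp add: x1_def complex_eq_iff power2_eq_square)
  have "bloch_ket a = vec2 x0 x1"
    by (simp add: bloch_ket_def x0_def x1_def S_def K_def t_def)
  then have "(\<Sum>i\<in>UNIV. cnj (bloch_ket a $ i) * (E *v bloch_ket a) $ i) =
      E$0$0 * (cnj x0 * x0) + E$0$1 * (cnj x0 * x1) + E$1$0 * (cnj x1 * x0) + E$1$1 * (cnj x1 * x1)"
    unfolding quadratic_form_2x2 by (simp add: algebra_simps)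
  then show ?thesis
    unfolding p00 p01 p10 p11 trace_mult_bloch_matrix .
qed

lemma Re_trace_mult_bloch_matrix_nonneg:
  assumes E: "psd E" and a: "norm a = 1"
  shows "0 \<le> Re (trace (E ** bloch_matrix 1 a))"
proof -
  have unit: "a \<bullet> a = 1"
    using a by (simp add: dot_square_norm)
  then have aa: "(a$1)\<^sup>2 + (a$2)\<^sup>2 + (a$3)\<^sup>2 = 1"
    by (simp add: inner_real_3)
  show ?thesis
  proof (cases "a$3 = -1")
    case True
    then have "a$1 = 0" "a$2 = 0"
      using aa by (simp_all add: sum_power2_eq_zero_iff)
    then have "trace (E ** bloch_matrix 1 a) = E$1$1"
      using True by (simp add: trace_mult_bloch_matrix complex_eq_iff)
    then show ?thesis
      using E by (simp add: psd_2x2_iff)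
  next
    case False
    have "(a$3)\<^sup>2 \<le> 1"
      using aa zero_le_power2[of "a$1"] zero_le_power2[of "a$2"] by linarith
    then have "\<bar>a$3\<bar> \<le> 1"
      by (simp add: abs_square_le_1)
    then have "a$3 > -1"
      using False by (simp add: abs_le_iff)
    then show ?thesis
      using E quadratic_form_bloch_ket[OF unit, of E]
      unfolding psd_def Let_def by metis
  qed
qed

definition tetrahedron :: "nat \<Rightarrow> real^3" where
  "tetrahedron i = (1 / sqrt 3) *\<^sub>R
     (if i = 1 then vector [1, 1, 1] else if i = 2 then vector [1, -1, -1]
      else if i = 3 then vector [-1, 1, -1] else vector [-1, -1, 1])"

lemma norm_tetrahedron: "norm (tetrahedron i) = 1"
  by (simp add: norm_eq_sqrt_inner inner_real_3 tetrahedron_def power2_eq_square power_divide)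

lemma werner_assemblage_tetrahedron_decomposition:
  assumes "hermitian_cm E"
  shows "werner_assemblage s E = (\<Sum>i=1..4.
     (Re (trace (E ** bloch_matrix 1 (tetrahedron i))) / 4) *\<^sub>R bloch_matrix 1 ((- 3 * s) *\<^sub>R tetrahedron i))"
proof -
  define c where "c = 1 / sqrt 3"
  have cc: "c * (c * x) = x / 3" for x
    by (simp add: c_def)
  have vertices: "tetrahedron 1 = c *\<^sub>R vector [1, 1, 1]" "tetrahedron 2 = c *\<^sub>R vector [1, -1, -1]"
    "tetrahedron 3 = c *\<^sub>R vector [-1, 1, -1]" "tetrahedron 4 = c *\<^sub>R vector [-1, -1, 1]"
    by (simp_all add: tetrahedron_def c_def)
  have "{1..4 :: nat} = {1, 2, 3, 4}"
    by auto
  then have sum_1_4: "(\<Sum>i=1..4. f i) = f 1 + f 2 + f 3 + f (4 :: nat)" for f :: "nat \<Rightarrow> complex^2^2"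
    by (simp add: add.assoc)
  show ?thesis
    using assms
    unfolding vec_eq_iff forall_UNIV_2 werner_assemblage_def hermitian_2x2_iff sum_1_4 vertices
    by (simp add: sum_component trace_mult_bloch_matrix complex_eq_iff,
        simp add: algebra_simps cc,
        simp add: field_simps)
qed

lemma werner_has_LHS_model_4:
  assumes s: "\<bar>s\<bar> \<le> 1/3" and F: "\<forall>M\<in>F. povm M"
  shows "has_LHS_model 4 (werner s) F"
  unfolding has_LHS_model_def
proof (intro exI conjI)
  let ?p = "\<lambda>i :: nat. 1/4 :: real"
  let ?\<rho> = "\<lambda>i. bloch_matrix 1 ((- 3 * s) *\<^sub>R tetrahedron i)"
  let ?q = "\<lambda>(M :: (complex^2^2) list) a i. Re (trace ((M ! a) ** bloch_matrix 1 (tetrahedron i)))"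
  have psd_M: "psd (M ! a)" if "M \<in> F" "a < length M" for M a
    using F that unfolding povm_def by auto
  show "\<forall>i\<in>{1..4}. 0 \<le> ?p i" "(\<Sum>i=1..4. ?p i) = 1"
    by simp_all
  show "\<forall>i\<in>{1..4}. density (?\<rho> i)"
  proof
    fix i :: nat
    have "norm ((- 3 * s) *\<^sub>R tetrahedron i) \<le> 1"
      using s by (simp add: norm_tetrahedron)
    then show "density (?\<rho> i)"
      unfolding density_def by (simp add: psd_bloch_matrix trace_bloch_matrix)
  qed
  show "\<forall>M\<in>F. \<forall>i\<in>{1..4}. (\<forall>a<length M. 0 \<le> ?q M a i) \<and> (\<Sum>a<length M. ?q M a i) = 1"
  proof (intro ballI conjI allI impI)
    fix M i a
    assume "M \<in> F" "a < length M"
    then show "0 \<le> ?q M a i"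
      using psd_M by (simp add: Re_trace_mult_bloch_matrix_nonneg norm_tetrahedron)
  next
    fix M i
    assume "M \<in> F"
    then have "(\<Sum>a<length M. M ! a) = mat 1"
      using F unfolding povm_def by (simp add: sum_list_sum_nth atLeast0LessThan)
    moreover have "(\<Sum>a<length M. ?q M a i) = Re (trace ((\<Sum>a<length M. M ! a) ** bloch_matrix 1 (tetrahedron i)))"
      by (simp add: trace_mult_bloch_matrix sum_component sum_distrib_right sum.distrib sum_divide_distrib)
    ultimately show "(\<Sum>a<length M. ?q M a i) = 1"
      by (simp add: trace_bloch_matrix)
  qed
  show "\<forall>M\<in>F. \<forall>a<length M. assemblage (werner s) M a = (\<Sum>i=1..4. (?q M a i * ?p i) *\<^sub>R ?\<rho> i)"
    using psd_M by (simp add: assemblage_werner werner_assemblage_tetrahedron_decomposition psd_def)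
qed

section \<open>No LHS model with four hidden states\<close>

lemma werner_assemblage_bloch_matrix:
  "werner_assemblage r (bloch_matrix 1 (- u)) = bloch_matrix (1/2) ((r/2) *\<^sub>R u)"
  unfolding vec_eq_iff forall_UNIV_2 werner_assemblage_def by (simp add: complex_eq_iff field_simps)

lemma povm_bloch_matrix_pair:
  assumes "norm u \<le> 1"
  shows "povm [bloch_matrix 1 (- u), bloch_matrix 1 u]"
proof -
  have "bloch_matrix 1 (- u) + bloch_matrix 1 u = mat 1"
    unfolding vec_eq_iff forall_UNIV_2 by (simp add: mat_def complex_eq_iff field_simps)
  then show ?thesis
    using assms unfolding povm_def by (simp add: psd_bloch_matrix)
qed

lemma werner_no_LHS_model:
  assumes r: "1/3 < r" and n: "n \<le> 4"
  shows "\<not> has_LHS_model n (werner r) {M. povm M}"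
proof
  assume "has_LHS_model n (werner r) {M. povm M}"
  then obtain p \<rho>s q where p: "\<forall>i\<in>{1..n}. 0 \<le> p i" and "(\<Sum>i=1..n. p i) = 1"
    and dens: "\<forall>i\<in>{1..n}. density (\<rho>s i)"
    and q: "\<forall>M\<in>{M. povm M}. \<forall>i\<in>{1..n}. (\<forall>a<length M. 0 \<le> q M a i) \<and> (\<Sum>a<length M. q M a i) = 1"
    and model: "\<forall>M\<in>{M. povm M}. \<forall>a<length M. assemblage (werner r) M a = (\<Sum>i=1..n. (q M a i * p i) *\<^sub>R \<rho>s i)"
    unfolding has_LHS_model_def by blast
  define P where "P = bloch_vector ` \<rho>s ` {1..n}"
  have "sphere 0 r \<subseteq> convex hull P"
  proof
    fix v :: "real^3" assume v: "v \<in> sphere 0 r"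
    define u where "u = v /\<^sub>R r"
    define M where "M = [bloch_matrix 1 (- u), bloch_matrix 1 u]"
    define w where "w i = 2 * (q M 0 i * p i)" for i
    have "norm u = 1"
      using v r by (simp add: u_def)
    then have M: "povm M"
      unfolding M_def by (simp add: povm_bloch_matrix_pair)
    have "0 < length M"
      by (simp add: M_def)
    then have "assemblage (werner r) M 0 = (\<Sum>i=1..n. (q M 0 i * p i) *\<^sub>R \<rho>s i)"
      using model M by blast
    then have "bloch_matrix (1/2) ((r/2) *\<^sub>R u) = (\<Sum>i=1..n. (q M 0 i * p i) *\<^sub>R \<rho>s i)"
      by (simp add: M_def assemblage_werner werner_assemblage_bloch_matrix)
    from arg_cong[OF this, of bloch_vector] arg_cong[OF this, of "\<lambda>A. Re (trace A)"]
    have bloch: "(r/2) *\<^sub>R u = (\<Sum>i=1..n. (q M 0 i * p i) *\<^sub>R bloch_vector (\<rho>s i))"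
      and trace: "1/2 = (\<Sum>i=1..n. (q M 0 i * p i) * Re (trace (\<rho>s i)))"
      by (simp_all only: bloch_vector_bloch_matrix trace_bloch_matrix Re_complex_of_real
          linear_sum[OF linear_bloch_vector] linear_cmul[OF linear_bloch_vector]
          linear_sum[OF linear_Re_trace] linear_cmul[OF linear_Re_trace] real_scaleR_def)
    have "v = 2 *\<^sub>R ((r/2) *\<^sub>R u)"
      using r by (simp add: u_def)
    also have "\<dots> = (\<Sum>i=1..n. w i *\<^sub>R bloch_vector (\<rho>s i))"
      unfolding bloch scaleR_right.sum by (simp add: w_def)
    also have "\<dots> \<in> convex hull P"
    proof (rule convex_sum)
      show "sum w {1..n} = 1"
        using trace dens by (simp add: w_def density_def flip: sum_distrib_left)
      show "0 \<le> w i" if "i \<in> {1..n}" for i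
        using that p q M by (simp add: w_def M_def)
      show "bloch_vector (\<rho>s i) \<in> convex hull P" if "i \<in> {1..n}" for i
        using that by (simp add: P_def hull_inc)
    qed simp_all
    finally show "v \<in> convex hull P" .
  qed
  moreover have "card P \<le> Suc DIM(real^3)"
    using card_image_le[of "{1..n}" \<rho>s] card_image_le[of "\<rho>s ` {1..n}" bloch_vector] n
    by (simp add: P_def)
  moreover have "P \<subseteq> cball 0 1"
    using dens norm_bloch_vector_le_1 by (auto simp: P_def)
  ultimately have "real DIM(real^3) * r \<le> 1"
    by (intro sphere_subset_convex_hull_radius_le) (simp_all add: P_def)
  then show False
    using r by simp
qed

section \<open>Simulation cost\<close>

lemma gamma_le:
  assumes "\<forall>F. (\<forall>M\<in>F. povm M) \<longrightarrow> has_LHS_model n \<rho> F"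
  shows "gamma \<rho> \<le> enat n"
proof -
  have "(LEAST m. \<forall>F. (\<forall>M\<in>F. povm M) \<longrightarrow> has_LHS_model m \<rho> F) \<le> n"
    using assms by (rule Least_le)
  moreover have "\<exists>m. \<forall>F. (\<forall>M\<in>F. povm M) \<longrightarrow> has_LHS_model m \<rho> F"
    using assms by blast
  ultimately show ?thesis
    unfolding gamma_def by simp
qed

lemma gamma_gt:
  assumes "\<forall>m\<le>n. \<not> has_LHS_model m \<rho> {M. povm M}"
  shows "enat n < gamma \<rho>"
proof (cases "\<exists>m. \<forall>F. (\<forall>M\<in>F. povm M) \<longrightarrow> has_LHS_model m \<rho> F")
  case True
  then have "\<forall>F. (\<forall>M\<in>F. povm M) \<longrightarrow>
      has_LHS_model (LEAST m. \<forall>F. (\<forall>M\<in>F. povm M) \<longrightarrow> has_LHS_model m \<rho> F) \<rho> F"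
    by (rule LeastI_ex)
  then have "has_LHS_model (LEAST m. \<forall>F. (\<forall>M\<in>F. povm M) \<longrightarrow> has_LHS_model m \<rho> F) \<rho> {M. povm M}"
    by auto
  then have "n < (LEAST m. \<forall>F. (\<forall>M\<in>F. povm M) \<longrightarrow> has_LHS_model m \<rho> F)"
    using assms not_le by blast
  then show ?thesis
    using True unfolding gamma_def by simp
next
  case False
  then have "gamma \<rho> = \<infinity>"
    unfolding gamma_def by (rule if_not_P)
  then show ?thesis
    by simp
qed

theorem corollary1:
  shows "(\<forall>r::real. 1/3 < r \<and> r \<le> 1/2 \<longrightarrow> gamma (werner r) > 4) \<and>
         (\<forall>r s :: real. 1/3 < r \<and> r \<le> 1/2 \<and> 0 \<le> s \<and> s \<le> 1/3 \<longrightarrow>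
              gamma (werner s) < gamma (werner r))"
proof -
  have entangled: "4 < gamma (werner r)" if "1/3 < r" for r :: real
  proof -
    have "enat 4 < gamma (werner r)"
      using werner_no_LHS_model[OF that] by (intro gamma_gt) blast
    then show ?thesis
      by (simp add: numeral_eq_enat)
  qed
  have separable: "gamma (werner s) \<le> 4" if "0 \<le> s" "s \<le> 1/3" for s :: real
  proof -
    have "gamma (werner s) \<le> enat 4"
      using that by (intro gamma_le allI impI werner_has_LHS_model_4) auto
    then show ?thesis
      by (simp add: numeral_eq_enat)
  qed
  show ?thesis
    using entangled separable by (auto intro: le_less_trans)
qed

end
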